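(* Let $c>0$ and $\lambda_1\le\lambda_2\le\dots\le\lambda_n$ be in $[0,1]$. The problem $\min_{w\in\Delta_n}\big(\|w\|_2^2+c(w^\top\lambda)^2\big)$ has a unique minimizer $w^*$, and it is given as follows. For $k\in[n]$ write $S_1(k)=\sum_{i\le k}\lambda_i$, $S_2(k)=\sum_{i\le k}\lambda_i^2$, and $\rho(k)=\frac{1+cS_2(k)}{cS_1(k)}$ (with $\rho(k)=+\infty$ if $S_1(k)=0$). Let $m$ be the largest $k\in[n]$ such that $\lambda_{j+1}<\rho(j)$ for all $1\le j<k$ (i.e., start from $k=1$ and increase $k$ while $k<n$ and $\lambda_{k+1}<\rho(k)$). Set \[ \beta=\frac{1+cS_2(m)}{m(1+cS_2(m))-cS_1(m)^2},\qquad \alpha=\frac{cS_1(m)\,\beta}{1+cS_2(m)}. \] Then $w^*_i=\beta-\alpha\lambda_i$ for $i\le m$ and $w^*_i=0$ for $i>m$. Moreover $w^*_i=(\beta'-c(w^{*\top}\lambda)\lambda_i)_+$ for all $i$ and a suitable scalar $\beta'$.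
   Context: $\Delta_n=\{w\in\mathbb R^n:w_i\ge0,\ \sum_iw_i=1\}$; $(x)_+=\max\{x,0\}$. *)

theory Defs
  imports Complex_Main "HOL-Library.Extended_Real"
begin

text \<open>Vectors in R^n are represented as functions nat => real indexed by {1..n}.
  The simplex Delta_n: nonnegative entries on {1..n} summing to 1, and zero outside {1..n}
  (so that uniqueness of the minimizer is meaningful).\<close>
definition simplex :: "nat \<Rightarrow> (nat \<Rightarrow> real) set" where
  "simplex n = {w. (\<forall>i\<in>{1..n}. 0 \<le> w i) \<and> (\<Sum>i=1..n. w i) = 1 \<and> (\<forall>i. i \<notin> {1..n} \<longrightarrow> w i = 0)}"

definition obj :: "nat \<Rightarrow> real \<Rightarrow> (nat \<Rightarrow> real) \<Rightarrow> (nat \<Rightarrow> real) \<Rightarrow> real" where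
  "obj n c lam w = (\<Sum>i=1..n. (w i)^2) + c * (\<Sum>i=1..n. w i * lam i)^2"

definition S1 :: "(nat \<Rightarrow> real) \<Rightarrow> nat \<Rightarrow> real" where
  "S1 lam k = (\<Sum>i=1..k. lam i)"

definition S2 :: "(nat \<Rightarrow> real) \<Rightarrow> nat \<Rightarrow> real" where
  "S2 lam k = (\<Sum>i=1..k. (lam i)^2)"

definition rho :: "real \<Rightarrow> (nat \<Rightarrow> real) \<Rightarrow> nat \<Rightarrow> ereal" where
  "rho c lam k = (if S1 lam k = 0 then \<infinity> else ereal ((1 + c * S2 lam k) / (c * S1 lam k)))"

definition mstar :: "nat \<Rightarrow> real \<Rightarrow> (nat \<Rightarrow> real) \<Rightarrow> nat" where
  "mstar n c lam = (GREATEST k. k \<in> {1..n} \<and> (\<forall>j. 1 \<le> j \<and> j < k \<longrightarrow> ereal (lam (j+1)) < rho c lam j))"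

definition betaw :: "real \<Rightarrow> (nat \<Rightarrow> real) \<Rightarrow> nat \<Rightarrow> real" where
  "betaw c lam m = (1 + c * S2 lam m) / (real m * (1 + c * S2 lam m) - c * (S1 lam m)^2)"

definition alphaw :: "real \<Rightarrow> (nat \<Rightarrow> real) \<Rightarrow> nat \<Rightarrow> real" where
  "alphaw c lam m = c * S1 lam m * betaw c lam m / (1 + c * S2 lam m)"

end

theory Submission
  imports Defs
begin

(* The objective |w|^2 + c (w.lam)^2 is a strictly convex quadratic. If w lies in the simplex and
   has the water-filling form w_i = (b - c (w.lam) lam_i)_+, i.e. satisfies the KKT conditions,
   then expanding the objective around w and using the first-order inequality gives
   obj v >= obj w + |v - w|^2 on the simplex, so w is the unique minimizer.

   The explicit w* has this form with b = beta and c (w*.lam) = alpha: up to the positive factor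
   m (1 + c S2(m)) - c S1(m)^2, its i-th entry is 1 + c S2(m) - c S1(m) lam_i. For i = k + 1 this
   equals 1 + c S2(k) - c S1(k) lam_(k+1), which is positive exactly when lam_(k+1) < rho(k).
   So the stopping rule defining m makes the numerator positive at i = m, hence at all i <= m
   since lam is sorted, and nonpositive at all i > m. *)

(* b is the Lagrange multiplier of the constraint sum w = 1 *)
definition is_kkt_point :: "nat \<Rightarrow> real \<Rightarrow> (nat \<Rightarrow> real) \<Rightarrow> (nat \<Rightarrow> real) \<Rightarrow> real \<Rightarrow> bool" where
  "is_kkt_point n c lam w b \<longleftrightarrow>
     (\<forall>i\<in>{1..n}. w i = max 0 (b - c * (\<Sum>j=1..n. w j * lam j) * lam i))"

lemma obj_expansion:
  "obj n c lam v = obj n c lam w + (\<Sum>i=1..n. (v i - w i)^2) + c * (\<Sum>i=1..n. (v i - w i) * lam i)^2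
     + 2 * (\<Sum>i=1..n. (w i + c * (\<Sum>j=1..n. w j * lam j) * lam i) * (v i - w i))"
proof -
  define s where "s = (\<Sum>j=1..n. w j * lam j)"
  define d where "d = (\<Sum>i=1..n. (v i - w i) * lam i)"
  have "(\<Sum>i=1..n. v i * lam i) = (\<Sum>i=1..n. w i * lam i + (v i - w i) * lam i)"
    by (rule sum.cong) (simp_all add: algebra_simps)
  then have sv: "(\<Sum>i=1..n. v i * lam i) = s + d"
    unfolding s_def d_def by (simp only: sum.distrib)
  have "(\<Sum>i=1..n. (v i)^2) = (\<Sum>i=1..n. (w i)^2 + (v i - w i)^2 + 2 * (w i * (v i - w i)))"
    by (rule sum.cong) (simp_all add: power2_eq_square algebra_simps)
  then have sq: "(\<Sum>i=1..n. (v i)^2) = (\<Sum>i=1..n. (w i)^2) + (\<Sum>i=1..n. (v i - w i)^2)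
                   + 2 * (\<Sum>i=1..n. w i * (v i - w i))"
    by (simp only: sum.distrib sum_distrib_left)
  have "(\<Sum>i=1..n. (w i + c * s * lam i) * (v i - w i))
          = (\<Sum>i=1..n. w i * (v i - w i) + c * s * ((v i - w i) * lam i))"
    by (rule sum.cong) (simp_all add: algebra_simps)
  then have grad: "(\<Sum>i=1..n. (w i + c * s * lam i) * (v i - w i))
                     = (\<Sum>i=1..n. w i * (v i - w i)) + c * s * d"
    unfolding d_def by (simp only: sum.distrib sum_distrib_left)
  have "obj n c lam v = obj n c lam w + (\<Sum>i=1..n. (v i - w i)^2) + c * d^2
          + 2 * ((\<Sum>i=1..n. w i * (v i - w i)) + c * s * d)"
    unfolding obj_def sv sq s_def[symmetric] by (simp add: power2_eq_square algebra_simps)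
  then show ?thesis
    unfolding grad[symmetric] by (simp only: s_def d_def)
qed

lemma kkt_variational_inequality:
  assumes "is_kkt_point n c lam w b" "w \<in> simplex n" "v \<in> simplex n"
  shows "0 \<le> (\<Sum>i=1..n. (w i + c * (\<Sum>j=1..n. w j * lam j) * lam i) * (v i - w i))"
proof -
  let ?a = "c * (\<Sum>j=1..n. w j * lam j)"
  have "(\<Sum>i=1..n. v i) = 1" "(\<Sum>i=1..n. w i) = 1"
    using assms(2,3) unfolding simplex_def by blast+
  then have "0 = (\<Sum>i=1..n. b * (v i - w i))"
    by (simp add: sum_subtractf flip: sum_distrib_left)
  also have "\<dots> \<le> (\<Sum>i=1..n. (w i + ?a * lam i) * (v i - w i))"
  proof (rule sum_mono)
    fix i assume i: "i \<in> {1..n}"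
    have wi: "w i = max 0 (b - ?a * lam i)" using assms(1) i unfolding is_kkt_point_def by blast
    show "b * (v i - w i) \<le> (w i + ?a * lam i) * (v i - w i)"
    proof (cases "0 \<le> b - ?a * lam i")
      case True
      then show ?thesis using wi by simp
    next
      case False
      moreover have "0 \<le> v i" using assms(3) i by (simp add: simplex_def)
      ultimately show ?thesis using wi by (simp add: mult_right_mono)
    qed
  qed
  finally show ?thesis .
qed

lemma kkt_point_obj_gap:
  assumes "0 \<le> c" "is_kkt_point n c lam w b" "w \<in> simplex n" "v \<in> simplex n"
  shows "obj n c lam w + (\<Sum>i=1..n. (v i - w i)^2) \<le> obj n c lam v"
  using obj_expansion[of n c lam v w] kkt_variational_inequality[OF assms(2-4)] assms(1) by simp

lemma kkt_point_minimizes: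
  assumes "0 \<le> c" "is_kkt_point n c lam w b" "w \<in> simplex n" "v \<in> simplex n"
  shows "obj n c lam w \<le> obj n c lam v"
  using kkt_point_obj_gap[OF assms] sum_nonneg[of "{1..n}" "\<lambda>i. (v i - w i)^2"] by simp

lemma kkt_point_unique_minimizer:
  assumes "0 \<le> c" "is_kkt_point n c lam w b" "w \<in> simplex n" "v \<in> simplex n"
    and "obj n c lam v \<le> obj n c lam w"
  shows "v = w"
proof
  fix i
  have "(\<Sum>i=1..n. (v i - w i)^2) = 0"
    using kkt_point_obj_gap[OF assms(1-4)] assms(5) sum_nonneg[of "{1..n}" "\<lambda>i. (v i - w i)^2"]
    by simp
  then have "\<forall>i\<in>{1..n}. v i = w i" by (simp add: sum_nonneg_eq_0_iff)
  then show "v i = w i" using assms(3,4) by (cases "i \<in> {1..n}") (auto simp: simplex_def)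
qed

lemma mstar_is_greatest:
  assumes "1 \<le> n"
  shows "mstar n c lam \<in> {1..n}"
    and "\<And>j. 1 \<le> j \<Longrightarrow> j < mstar n c lam \<Longrightarrow> ereal (lam (j+1)) < rho c lam j"
    and "\<And>k. k \<in> {1..n} \<Longrightarrow> \<forall>j. 1 \<le> j \<and> j < k \<longrightarrow> ereal (lam (j+1)) < rho c lam j
           \<Longrightarrow> k \<le> mstar n c lam"
proof -
  let ?P = "\<lambda>k. k \<in> {1..n} \<and> (\<forall>j. 1 \<le> j \<and> j < k \<longrightarrow> ereal (lam (j+1)) < rho c lam j)"
  have P1: "?P 1" and bound: "\<And>k. ?P k \<Longrightarrow> k \<le> n" using assms by auto
  have "?P (mstar n c lam)"
    unfolding mstar_def by (rule GreatestI_nat[where P = ?P, OF P1 bound])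
  then show "mstar n c lam \<in> {1..n}"
    and "\<And>j. 1 \<le> j \<Longrightarrow> j < mstar n c lam \<Longrightarrow> ereal (lam (j+1)) < rho c lam j"
    by auto
  show "k \<le> mstar n c lam" if "k \<in> {1..n}" "\<forall>j. 1 \<le> j \<and> j < k \<longrightarrow> ereal (lam (j+1)) < rho c lam j" for k
    unfolding mstar_def by (rule Greatest_le_nat[where P = ?P, OF _ bound]) (use that in auto)
qed

lemma rho_0: "rho c lam 0 = \<infinity>"
  by (simp add: rho_def S1_def)

lemma lam_less_rho_below_mstar:
  assumes "1 \<le> n" "j < mstar n c lam"
  shows "ereal (lam (Suc j)) < rho c lam j"
  using mstar_is_greatest(2)[OF assms(1)] assms(2) by (cases "j = 0") (auto simp: rho_0)

lemma rho_le_lam_after_mstar: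
  assumes "1 \<le> n" "mstar n c lam < n"
  shows "rho c lam (mstar n c lam) \<le> ereal (lam (Suc (mstar n c lam)))"
proof (rule ccontr)
  let ?m = "mstar n c lam"
  assume "\<not> ?thesis"
  then have "\<forall>j. 1 \<le> j \<and> j < Suc ?m \<longrightarrow> ereal (lam (j+1)) < rho c lam j"
    using mstar_is_greatest(2)[OF assms(1)] less_Suc_eq by auto
  then have "Suc ?m \<le> ?m"
    using mstar_is_greatest(3)[OF assms(1), of "Suc ?m"] assms(2) by simp
  then show False by simp
qed

definition weight_numerator :: "real \<Rightarrow> (nat \<Rightarrow> real) \<Rightarrow> nat \<Rightarrow> nat \<Rightarrow> real" where
  "weight_numerator c lam m i = 1 + c * S2 lam m - c * S1 lam m * lam i"

definition weight_denominator :: "real \<Rightarrow> (nat \<Rightarrow> real) \<Rightarrow> nat \<Rightarrow> real" where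
  "weight_denominator c lam m = real m * (1 + c * S2 lam m) - c * (S1 lam m)^2"

lemma S2_nonneg: "0 \<le> S2 lam k"
  by (simp add: S2_def sum_nonneg)

lemma betaw_minus_alphaw:
  assumes "1 + c * S2 lam m \<noteq> 0"
  shows "betaw c lam m - alphaw c lam m * lam i = weight_numerator c lam m i / weight_denominator c lam m"
  using assms
  by (simp add: betaw_def alphaw_def weight_numerator_def weight_denominator_def diff_divide_distrib)

lemma alphaw_eq:
  assumes "1 + c * S2 lam m \<noteq> 0"
  shows "alphaw c lam m = c * S1 lam m / weight_denominator c lam m"
  using assms by (simp add: betaw_def alphaw_def weight_denominator_def)

lemma sum_weight_numerator: "(\<Sum>i=1..m. weight_numerator c lam m i) = weight_denominator c lam m"
proof -
  have "(\<Sum>i=1..m. weight_numerator c lam m i) = (\<Sum>i=1..m. (1 + c * S2 lam m) - c * S1 lam m * lam i)"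
    by (simp add: weight_numerator_def)
  also have "\<dots> = real m * (1 + c * S2 lam m) - c * S1 lam m * S1 lam m"
    by (simp add: sum_subtractf S1_def flip: sum_distrib_left)
  finally show ?thesis by (simp add: weight_denominator_def power2_eq_square)
qed

lemma sum_weight_numerator_lam: "(\<Sum>i=1..m. weight_numerator c lam m i * lam i) = S1 lam m"
proof -
  have "(\<Sum>i=1..m. weight_numerator c lam m i * lam i)
          = (\<Sum>i=1..m. (1 + c * S2 lam m) * lam i - c * S1 lam m * (lam i)^2)"
    by (rule sum.cong) (simp_all add: weight_numerator_def power2_eq_square algebra_simps)
  also have "\<dots> = (1 + c * S2 lam m) * S1 lam m - c * S1 lam m * S2 lam m"
    by (simp only: sum_subtractf flip: sum_distrib_left) (simp only: S1_def S2_def)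
  finally show ?thesis by (simp add: algebra_simps)
qed

lemma weight_numerator_Suc_self:
  "weight_numerator c lam (Suc k) (Suc k) = 1 + c * S2 lam k - c * S1 lam k * lam (Suc k)"
  by (simp add: weight_numerator_def S1_def S2_def power2_eq_square algebra_simps)

lemma weight_numerator_Suc_self_pos:
  assumes "0 < c" "0 \<le> S1 lam k" "ereal (lam (Suc k)) < rho c lam k"
  shows "0 < weight_numerator c lam (Suc k) (Suc k)"
proof (cases "S1 lam k = 0")
  case True
  then show ?thesis
    using assms(1) S2_nonneg[of lam k] by (simp add: weight_numerator_Suc_self add_pos_nonneg)
next
  case False
  then have "0 < c * S1 lam k" using assms(1,2) by simp
  moreover have "lam (Suc k) < (1 + c * S2 lam k) / (c * S1 lam k)"
    using assms(3) False by (simp add: rho_def)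
  ultimately show ?thesis
    by (simp add: weight_numerator_Suc_self pos_less_divide_eq algebra_simps)
qed

lemma weight_numerator_nonpos:
  assumes "0 < c" "0 \<le> S1 lam m" "rho c lam m \<le> ereal l" "l \<le> lam i"
  shows "weight_numerator c lam m i \<le> 0"
proof -
  have "S1 lam m \<noteq> 0" using assms(3) by (auto simp: rho_def)
  then have pos: "0 < c * S1 lam m" using assms(1,2) by simp
  then have "1 + c * S2 lam m \<le> l * (c * S1 lam m)"
    using assms(3) \<open>S1 lam m \<noteq> 0\<close> by (simp add: rho_def pos_divide_le_eq)
  also have "\<dots> \<le> lam i * (c * S1 lam m)"
    using assms(4) pos by (simp add: mult_right_mono)
  finally show ?thesis by (simp add: weight_numerator_def algebra_simps)
qed

locale sorted_nonneg_lam =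
  fixes n :: nat and c :: real and lam :: "nat \<Rightarrow> real"
  assumes n_pos: "1 \<le> n" and c_pos: "0 < c"
    and lam_nonneg: "\<And>i. i \<in> {1..n} \<Longrightarrow> 0 \<le> lam i"
    and lam_mono: "\<And>i j. 1 \<le> i \<Longrightarrow> i \<le> j \<Longrightarrow> j \<le> n \<Longrightarrow> lam i \<le> lam j"
begin

abbreviation m :: nat where "m \<equiv> mstar n c lam"

lemma m_in_range: "m \<in> {1..n}"
  using mstar_is_greatest(1)[OF n_pos] .

lemma S1_nonneg: "k \<le> n \<Longrightarrow> 0 \<le> S1 lam k"
  unfolding S1_def by (auto intro!: sum_nonneg lam_nonneg)

lemma one_plus_c_S2_nonzero: "1 + c * S2 lam k \<noteq> 0"
proof -
  have "0 \<le> c * S2 lam k" using c_pos S2_nonneg[of lam k] by simp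
  then show ?thesis by linarith
qed

lemma weight_numerator_pos:
  assumes "1 \<le> i" "i \<le> m"
  shows "0 < weight_numerator c lam m i"
proof -
  obtain k where k: "m = Suc k" using assms by (cases m) auto
  have "0 < weight_numerator c lam m m"
    unfolding k using lam_less_rho_below_mstar[OF n_pos, of k] m_in_range k
    by (intro weight_numerator_Suc_self_pos c_pos S1_nonneg) auto
  also have "\<dots> \<le> weight_numerator c lam m i"
    using lam_mono[of i m] assms m_in_range c_pos S1_nonneg[of m]
    by (auto simp: weight_numerator_def intro!: mult_left_mono)
  finally show ?thesis .
qed

lemma weight_numerator_nonpos_beyond_m:
  assumes "m < i" "i \<le> n"
  shows "weight_numerator c lam m i \<le> 0"
  using assms m_in_range lam_mono[of "Suc m" i]
  by (intro weight_numerator_nonpos[OF c_pos _ rho_le_lam_after_mstar[OF n_pos]] S1_nonneg) auto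

lemma weight_denominator_pos: "0 < weight_denominator c lam m"
  unfolding sum_weight_numerator[symmetric] using m_in_range
  by (intro sum_pos) (auto intro: weight_numerator_pos)

definition wstar :: "nat \<Rightarrow> real" where
  "wstar = (\<lambda>i. if 1 \<le> i \<and> i \<le> m then betaw c lam m - alphaw c lam m * lam i else 0)"

lemma wstar_eq:
  "wstar i = (if 1 \<le> i \<and> i \<le> m then weight_numerator c lam m i / weight_denominator c lam m else 0)"
  by (simp add: wstar_def betaw_minus_alphaw[OF one_plus_c_S2_nonzero])

lemma wstar_eq_max:
  assumes "i \<in> {1..n}"
  shows "wstar i = max 0 (betaw c lam m - alphaw c lam m * lam i)"
proof -
  have "betaw c lam m - alphaw c lam m * lam i = weight_numerator c lam m i / weight_denominator c lam m"
    by (rule betaw_minus_alphaw[OF one_plus_c_S2_nonzero])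
  then show ?thesis
    using assms weight_numerator_pos[of i] weight_numerator_nonpos_beyond_m[of i] weight_denominator_pos
    by (auto simp: wstar_eq divide_nonpos_pos)
qed

lemma sum_wstar_mult:
  "(\<Sum>i=1..n. wstar i * f i)
     = (\<Sum>i=1..m. weight_numerator c lam m i * f i) / weight_denominator c lam m"
  unfolding sum_divide_distrib using m_in_range
  by (intro sum.mono_neutral_cong_right) (auto simp: wstar_eq)

lemma wstar_in_simplex: "wstar \<in> simplex n"
  unfolding simplex_def
proof (intro CollectI conjI ballI allI impI)
  show "0 \<le> wstar i" if "i \<in> {1..n}" for i
    using that by (simp add: wstar_eq_max)
  show "(\<Sum>i=1..n. wstar i) = 1"
    using sum_wstar_mult[of "\<lambda>_. 1"] sum_weight_numerator[of c lam m] weight_denominator_pos by simp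
  show "wstar i = 0" if "i \<notin> {1..n}" for i
    using that m_in_range by (auto simp: wstar_def)
qed

lemma wstar_is_kkt_point: "is_kkt_point n c lam wstar (betaw c lam m)"
proof -
  have "c * (\<Sum>j=1..n. wstar j * lam j) = alphaw c lam m"
    using sum_wstar_mult[of lam] sum_weight_numerator_lam[of c lam m]
    by (simp add: alphaw_eq[OF one_plus_c_S2_nonzero])
  then show ?thesis
    by (simp add: is_kkt_point_def wstar_eq_max)
qed

end

theorem mainTheorem3:
  fixes n :: nat and c :: real and lam :: "nat \<Rightarrow> real"
  assumes "1 \<le> n" and "c > 0"
    and "\<forall>i\<in>{1..n}. 0 \<le> lam i \<and> lam i \<le> 1"
    and "\<forall>i j. 1 \<le> i \<and> i \<le> j \<and> j \<le> n \<longrightarrow> lam i \<le> lam j"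
  shows "let m = mstar n c lam; b = betaw c lam m; a = alphaw c lam m;
             ws = (\<lambda>i. if 1 \<le> i \<and> i \<le> m then b - a * lam i else 0)
         in ws \<in> simplex n
            \<and> (\<forall>v\<in>simplex n. obj n c lam ws \<le> obj n c lam v)
            \<and> (\<forall>v\<in>simplex n. (\<forall>u\<in>simplex n. obj n c lam v \<le> obj n c lam u) \<longrightarrow> v = ws)
            \<and> (\<exists>b'. \<forall>i\<in>{1..n}. ws i = max 0 (b' - c * (\<Sum>j=1..n. ws j * lam j) * lam i))"
proof -
  interpret sorted_nonneg_lam n c lam
    using assms by unfold_locales auto
  note kkt = wstar_is_kkt_point and c_nonneg = less_imp_le[OF c_pos]
  have "\<forall>v\<in>simplex n. obj n c lam wstar \<le> obj n c lam v"
    using kkt_point_minimizes[OF c_nonneg kkt wstar_in_simplex] by blast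
  moreover have "\<forall>v\<in>simplex n. (\<forall>u\<in>simplex n. obj n c lam v \<le> obj n c lam u) \<longrightarrow> v = wstar"
    using kkt_point_unique_minimizer[OF c_nonneg kkt wstar_in_simplex] wstar_in_simplex by blast
  moreover have "\<exists>b'. \<forall>i\<in>{1..n}. wstar i = max 0 (b' - c * (\<Sum>j=1..n. wstar j * lam j) * lam i)"
    using kkt unfolding is_kkt_point_def by blast
  ultimately show ?thesis
    using wstar_in_simplex unfolding Let_def wstar_def by blast
qed

end
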